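(* Let $G_1=(V_1,E_1)$ and $G_2=(V_2,E_2)$ be finite, simple, connected graphs. The following are equivalent: (i) $G_1$ and $G_2$ are reflective; (ii) the cartesian product $G_1\times G_2$ is reflective.
   Context: $d$ is the combinatorial distance. For adjacent $x\sim y$ in a graph with vertex set $V$ let $V_x^y=\{v: d(v,x)<d(v,y)\}$, $V^{xy}=\{v:d(v,x)=d(v,y)\}$. A reflection from $x$ to $y$ is a graph automorphism $\phi$ with $\phi\circ\phi=\mathrm{id}$, $\phi(x)=y$, such that the edges between $V_x^y$ and $V_y^x$ are exactly $\{\{x',\phi(x')\}:x'\in V_x^y\}$ and $\phi$ fixes $V^{xy}$ pointwise. A graph is reflective if every edge admits a reflection. Cartesian product: vertex set $V_1\times V_2$, $(a,b)\sim(a',b')$ iff ($a=a'$, $b\sim b'$) or ($a\sim a'$, $b=b'$). *)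

theory Defs
  imports Main
begin

definition simple_graph :: "'a set \<Rightarrow> ('a \<Rightarrow> 'a \<Rightarrow> bool) \<Rightarrow> bool" where
  "simple_graph V E \<longleftrightarrow>
     (\<forall>u v. E u v \<longrightarrow> u \<in> V \<and> v \<in> V) \<and>
     (\<forall>u v. E u v \<longrightarrow> E v u) \<and>
     (\<forall>u. \<not> E u u)"

definition walk :: "'a set \<Rightarrow> ('a \<Rightarrow> 'a \<Rightarrow> bool) \<Rightarrow> 'a list \<Rightarrow> bool" where
  "walk V E p \<longleftrightarrow> p \<noteq> [] \<and> set p \<subseteq> V \<and>
     (\<forall>i. Suc i < length p \<longrightarrow> E (p ! i) (p ! Suc i))"

definition connected_graph :: "'a set \<Rightarrow> ('a \<Rightarrow> 'a \<Rightarrow> bool) \<Rightarrow> bool" where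
  "connected_graph V E \<longleftrightarrow> V \<noteq> {} \<and>
     (\<forall>u\<in>V. \<forall>v\<in>V. \<exists>p. walk V E p \<and> hd p = u \<and> last p = v)"

definition gdist :: "'a set \<Rightarrow> ('a \<Rightarrow> 'a \<Rightarrow> bool) \<Rightarrow> 'a \<Rightarrow> 'a \<Rightarrow> nat" where
  "gdist V E u v = (LEAST n. \<exists>p. walk V E p \<and> hd p = u \<and> last p = v \<and> length p = Suc n)"

definition automorphism :: "'a set \<Rightarrow> ('a \<Rightarrow> 'a \<Rightarrow> bool) \<Rightarrow> ('a \<Rightarrow> 'a) \<Rightarrow> bool" where
  "automorphism V E \<phi> \<longleftrightarrow> bij_betw \<phi> V V \<and>
     (\<forall>u\<in>V. \<forall>v\<in>V. E (\<phi> u) (\<phi> v) \<longleftrightarrow> E u v)"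

definition closer :: "'a set \<Rightarrow> ('a \<Rightarrow> 'a \<Rightarrow> bool) \<Rightarrow> 'a \<Rightarrow> 'a \<Rightarrow> 'a set" where
  "closer V E x y = {v \<in> V. gdist V E v x < gdist V E v y}"

definition equidist :: "'a set \<Rightarrow> ('a \<Rightarrow> 'a \<Rightarrow> bool) \<Rightarrow> 'a \<Rightarrow> 'a \<Rightarrow> 'a set" where
  "equidist V E x y = {v \<in> V. gdist V E v x = gdist V E v y}"

text \<open>A reflection from x to y. The condition on edges says: the set of edges
  between V_x^y and V_y^x equals {{x', \<phi> x'} : x' \<in> V_x^y}.\<close>
definition reflection :: "'a set \<Rightarrow> ('a \<Rightarrow> 'a \<Rightarrow> bool) \<Rightarrow> 'a \<Rightarrow> 'a \<Rightarrow> ('a \<Rightarrow> 'a) \<Rightarrow> bool" where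
  "reflection V E x y \<phi> \<longleftrightarrow>
     automorphism V E \<phi> \<and>
     (\<forall>v\<in>V. \<phi> (\<phi> v) = v) \<and>
     \<phi> x = y \<and>
     (\<forall>u\<in>closer V E x y. \<forall>w\<in>closer V E y x. E u w \<longleftrightarrow> w = \<phi> u) \<and>
     (\<forall>u\<in>closer V E x y. \<phi> u \<in> closer V E y x \<and> E u (\<phi> u)) \<and>
     (\<forall>v\<in>equidist V E x y. \<phi> v = v)"

definition reflective :: "'a set \<Rightarrow> ('a \<Rightarrow> 'a \<Rightarrow> bool) \<Rightarrow> bool" where
  "reflective V E \<longleftrightarrow> (\<forall>x\<in>V. \<forall>y\<in>V. E x y \<longrightarrow> (\<exists>\<phi>. reflection V E x y \<phi>))"

definition cart_edges :: "('a \<Rightarrow> 'a \<Rightarrow> bool) \<Rightarrow> ('b \<Rightarrow> 'b \<Rightarrow> bool) \<Rightarrow> 'a \<times> 'b \<Rightarrow> 'a \<times> 'b \<Rightarrow> bool" where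
  "cart_edges E1 E2 p q \<longleftrightarrow>
     (fst p = fst q \<and> E2 (snd p) (snd q)) \<or> (E1 (fst p) (fst q) \<and> snd p = snd q)"

end

theory Submission
  imports Defs
begin

(* In the cartesian product, d((u,v),(u',v')) = d1(u,u') + d2(v,v'). Hence for an edge
   (a,b) -- (a',b) of the first kind the sets V_x^y and V^xy are the products of the corresponding
   sets of G1 with V2, and a reflection psi of G1 yields the reflection psi x id of the product.
   Conversely, a reflection Phi of the product for this edge preserves second coordinates: it
   matches each vertex of V_x^y with an adjacent vertex of V_y^x, whose first coordinate differs,
   so the matching edge is a G1-edge; vertices of V_y^x are handled through the involution, and
   V^xy is fixed. So Phi restricts to a reflection of G1 on the fibre V1 x {b}. Edges of the second
   kind reduce to the first kind via the coordinate swap, an isomorphism of products, and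
   isomorphisms carry reflections to reflections. *)

inductive reach :: "'a set \<Rightarrow> ('a \<Rightarrow> 'a \<Rightarrow> bool) \<Rightarrow> 'a \<Rightarrow> 'a \<Rightarrow> nat \<Rightarrow> bool"
  for V E where
  reach_refl: "u \<in> V \<Longrightarrow> reach V E u u 0"
| reach_step: "reach V E u v n \<Longrightarrow> E v w \<Longrightarrow> w \<in> V \<Longrightarrow> reach V E u w (Suc n)"

lemma walk_append_singleton:
  assumes "q \<noteq> []"
  shows "walk V E (q @ [w]) \<longleftrightarrow> walk V E q \<and> E (last q) w \<and> w \<in> V"
proof -
  have last_q: "(q @ [w]) ! (length q - 1) = last q" "(q @ [w]) ! Suc (length q - 1) = w"
    using assms by (simp_all add: last_conv_nth nth_append)
  have "(\<forall>i. Suc i < length (q @ [w]) \<longrightarrow> E ((q @ [w]) ! i) ((q @ [w]) ! Suc i)) \<longleftrightarrow>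
        (\<forall>i. Suc i < length q \<longrightarrow> E (q ! i) (q ! Suc i)) \<and> E (last q) w"
    (is "(\<forall>i. ?l i) \<longleftrightarrow> (\<forall>i. ?r i) \<and> _")
  proof (intro iffI conjI allI impI)
    fix i
    assume l: "\<forall>i. ?l i" and i: "Suc i < length q"
    show "E (q ! i) (q ! Suc i)"
      using l[rule_format, of i] i by (simp add: nth_append)
  next
    assume "\<forall>i. ?l i"
    then show "E (last q) w"
      using assms last_q by (metis Suc_pred' length_append_singleton length_greater_0_conv lessI)
  next
    fix i
    assume r: "(\<forall>i. ?r i) \<and> E (last q) w" and i: "Suc i < length (q @ [w])"
    show "E ((q @ [w]) ! i) ((q @ [w]) ! Suc i)"
    proof (cases "Suc i < length q")
      case True
      then show ?thesis using r by (simp add: nth_append)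
    next
      case False
      then have "i = length q - 1"
        using i by simp
      then show ?thesis using r last_q by simp
    qed
  qed
  then show ?thesis
    using assms unfolding walk_def by auto
qed

lemma reach_iff_walk:
  "reach V E u v n \<longleftrightarrow> (\<exists>p. walk V E p \<and> hd p = u \<and> last p = v \<and> length p = Suc n)"
proof
  assume "reach V E u v n"
  then show "\<exists>p. walk V E p \<and> hd p = u \<and> last p = v \<and> length p = Suc n"
  proof (induction rule: reach.induct)
    case (reach_refl u)
    then show ?case by (intro exI[of _ "[u]"]) (auto simp: walk_def)
  next
    case (reach_step u v n w)
    then obtain p where p: "walk V E p" "hd p = u" "last p = v" "length p = Suc n"
      by blast
    then have "p \<noteq> []"
      by auto
    with p reach_step.hyps show ?case
      by (intro exI[of _ "p @ [w]"]) (simp add: walk_append_singleton)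
  qed
next
  assume "\<exists>p. walk V E p \<and> hd p = u \<and> last p = v \<and> length p = Suc n"
  then obtain p where "walk V E p" "hd p = u" "last p = v" "length p = Suc n"
    by blast
  then show "reach V E u v n"
  proof (induction p arbitrary: v n rule: rev_induct)
    case Nil
    then show ?case by simp
  next
    case (snoc w q)
    show ?case
    proof (cases "q = []")
      case True
      then show ?thesis using snoc.prems by (auto simp: walk_def intro: reach_refl)
    next
      case False
      with snoc.prems have q: "walk V E q" "E (last q) w" "w \<in> V"
        by (simp_all add: walk_append_singleton)
      moreover have "hd q = u"
        using False snoc.prems(2) by simp
      ultimately have "reach V E u (last q) (length q - 1)"
        using False by (intro snoc.IH) auto
      from reach_step[OF this q(2,3)] False snoc.prems show ?thesis
        by simp
    qed
  qed
qed

lemma gdist_eq_Least_reach: "gdist V E u v = (LEAST n. reach V E u v n)"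
  unfolding gdist_def reach_iff_walk ..

lemma gdist_le_reach: "reach V E u v n \<Longrightarrow> gdist V E u v \<le> n"
  unfolding gdist_eq_Least_reach by (rule Least_le)

lemma reach_gdist: "reach V E u v n \<Longrightarrow> reach V E u v (gdist V E u v)"
  unfolding gdist_eq_Least_reach by (rule LeastI)

lemma reach_vertices: "reach V E u v n \<Longrightarrow> u \<in> V \<and> v \<in> V"
  by (induction rule: reach.induct) auto

lemma reach_trans: "reach V E v w n \<Longrightarrow> reach V E u v m \<Longrightarrow> reach V E u w (m + n)"
  by (induction rule: reach.induct) (auto intro: reach_step)

lemma reach_edge: "E u v \<Longrightarrow> u \<in> V \<Longrightarrow> v \<in> V \<Longrightarrow> reach V E u v 1"
  using reach_step[OF reach_refl] by fastforce

lemma gdist_self: "u \<in> V \<Longrightarrow> gdist V E u u = 0"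
  using gdist_le_reach[OF reach_refl] by auto

lemma gdist_edge: "E u v \<Longrightarrow> u \<in> V \<Longrightarrow> v \<in> V \<Longrightarrow> gdist V E u v \<le> 1"
  using gdist_le_reach[OF reach_edge] by auto

lemma connected_graph_reach:
  assumes "connected_graph V E" "u \<in> V" "v \<in> V"
  shows "reach V E u v (gdist V E u v)"
proof -
  obtain p where "walk V E p" "hd p = u" "last p = v"
    using assms unfolding connected_graph_def by blast
  moreover from this have "length p = Suc (length p - 1)"
    by (simp add: walk_def)
  ultimately have "reach V E u v (length p - 1)"
    unfolding reach_iff_walk by blast
  then show ?thesis
    by (rule reach_gdist)
qed

lemma gdist_triangle:
  assumes "connected_graph V E" "u \<in> V" "v \<in> V" "w \<in> V"
  shows "gdist V E u w \<le> gdist V E u v + gdist V E v w"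
  using assms by (intro gdist_le_reach reach_trans[of V E v w _ u] connected_graph_reach)

definition graph_hom :: "'a set \<Rightarrow> ('a \<Rightarrow> 'a \<Rightarrow> bool) \<Rightarrow> 'b set \<Rightarrow> ('b \<Rightarrow> 'b \<Rightarrow> bool) \<Rightarrow> ('a \<Rightarrow> 'b) \<Rightarrow> bool"
  where "graph_hom V E W F f \<longleftrightarrow> (\<forall>u\<in>V. f u \<in> W) \<and> (\<forall>u\<in>V. \<forall>v\<in>V. E u v \<longrightarrow> F (f u) (f v))"

definition graph_iso ::
  "'a set \<Rightarrow> ('a \<Rightarrow> 'a \<Rightarrow> bool) \<Rightarrow> 'b set \<Rightarrow> ('b \<Rightarrow> 'b \<Rightarrow> bool) \<Rightarrow> ('a \<Rightarrow> 'b) \<Rightarrow> ('b \<Rightarrow> 'a) \<Rightarrow> bool"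
  where "graph_iso V E W F f g \<longleftrightarrow> graph_hom V E W F f \<and> graph_hom W F V E g \<and>
    (\<forall>u\<in>V. g (f u) = u) \<and> (\<forall>w\<in>W. f (g w) = w)"

lemma graph_iso_sym: "graph_iso V E W F f g \<Longrightarrow> graph_iso W F V E g f"
  unfolding graph_iso_def by blast

lemma graph_iso_edge_iff:
  assumes "graph_iso V E W F f g" "u \<in> V" "v \<in> V"
  shows "F (f u) (f v) \<longleftrightarrow> E u v"
proof
  assume "F (f u) (f v)"
  moreover have "f u \<in> W" "f v \<in> W"
    using assms by (simp_all add: graph_iso_def graph_hom_def)
  ultimately have "E (g (f u)) (g (f v))"
    using assms(1) by (simp add: graph_iso_def graph_hom_def)
  then show "E u v"
    using assms by (simp add: graph_iso_def)
next
  assume "E u v"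
  then show "F (f u) (f v)"
    using assms by (simp add: graph_iso_def graph_hom_def)
qed

lemma graph_iso_comp:
  "graph_iso V E W F f g \<Longrightarrow> graph_iso W F X G f' g' \<Longrightarrow> graph_iso V E X G (f' \<circ> f) (g \<circ> g')"
  unfolding graph_iso_def graph_hom_def by auto

lemma involutive_automorphism_iff_graph_iso:
  "automorphism V E \<phi> \<and> (\<forall>v\<in>V. \<phi> (\<phi> v) = v) \<longleftrightarrow> graph_iso V E V E \<phi> \<phi>"
proof
  assume "automorphism V E \<phi> \<and> (\<forall>v\<in>V. \<phi> (\<phi> v) = v)"
  then show "graph_iso V E V E \<phi> \<phi>"
    unfolding automorphism_def graph_iso_def graph_hom_def by (auto dest: bij_betwE)
next
  assume iso: "graph_iso V E V E \<phi> \<phi>"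
  then have "bij_betw \<phi> V V"
    by (intro bij_betw_byWitness[of V \<phi> \<phi>]) (auto simp: graph_iso_def graph_hom_def)
  with iso show "automorphism V E \<phi> \<and> (\<forall>v\<in>V. \<phi> (\<phi> v) = v)"
    unfolding automorphism_def by (simp add: graph_iso_edge_iff) (simp add: graph_iso_def)
qed

lemma reach_graph_hom: "reach V E u v n \<Longrightarrow> graph_hom V E W F f \<Longrightarrow> reach W F (f u) (f v) n"
proof (induction rule: reach.induct)
  case (reach_refl u)
  then show ?case by (simp add: graph_hom_def reach.reach_refl)
next
  case (reach_step u v n w)
  then show ?case
    using reach_vertices[OF reach_step.hyps(1)] unfolding graph_hom_def
    by (blast intro: reach.reach_step)
qed

lemma gdist_graph_iso:
  assumes "graph_iso V E W F f g" "u \<in> V" "v \<in> V"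
  shows "gdist W F (f u) (f v) = gdist V E u v"
proof -
  have "reach W F (f u) (f v) = reach V E u v"
  proof (intro ext iffI)
    fix n
    assume "reach W F (f u) (f v) n"
    then show "reach V E u v n"
      using assms reach_graph_hom[of W F "f u" "f v" n V E g] unfolding graph_iso_def by auto
  next
    fix n
    assume "reach V E u v n"
    then show "reach W F (f u) (f v) n"
      using assms reach_graph_hom[of V E u v n W F f] unfolding graph_iso_def by auto
  qed
  then show ?thesis
    unfolding gdist_eq_Least_reach by simp
qed

lemma closer_disjoint: "u \<in> closer V E x y \<Longrightarrow> u \<notin> closer V E y x"
  unfolding closer_def by auto

lemma graph_iso_Collect: "graph_iso V E W F f g \<Longrightarrow> {w \<in> W. P w} = f ` {v \<in> V. P (f v)}"
  unfolding graph_iso_def graph_hom_def by (auto intro!: image_eqI)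

lemma closer_graph_iso:
  "graph_iso V E W F f g \<Longrightarrow> x \<in> V \<Longrightarrow> y \<in> V \<Longrightarrow> closer W F (f x) (f y) = f ` closer V E x y"
  unfolding closer_def by (simp add: graph_iso_Collect gdist_graph_iso cong: conj_cong)

lemma equidist_graph_iso:
  "graph_iso V E W F f g \<Longrightarrow> x \<in> V \<Longrightarrow> y \<in> V \<Longrightarrow> equidist W F (f x) (f y) = f ` equidist V E x y"
  unfolding equidist_def by (simp add: graph_iso_Collect gdist_graph_iso cong: conj_cong)

lemma reflection_graph_iso: "reflection V E x y \<phi> \<Longrightarrow> graph_iso V E V E \<phi> \<phi>"
  unfolding reflection_def by (simp add: involutive_automorphism_iff_graph_iso[symmetric])

lemma reflection_transfer:
  assumes iso: "graph_iso V E W F f g" and x: "x \<in> V" and refl: "reflection V E x y \<phi>"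
  shows "reflection W F (f x) (f y) (f \<circ> \<phi> \<circ> g)"
proof -
  have \<phi>: "graph_iso V E V E \<phi> \<phi>"
    using refl by (rule reflection_graph_iso)
  have \<phi>_V: "\<phi> v \<in> V" if "v \<in> V" for v
    using \<phi> that by (simp add: graph_iso_def graph_hom_def)
  have y: "y \<in> V" "\<phi> x = y"
    using \<phi>_V x refl by (auto simp: reflection_def)
  have gf: "g (f v) = v" if "v \<in> V" for v
    using iso that by (simp add: graph_iso_def)
  have f_inj: "f v = f w \<longleftrightarrow> v = w" if "v \<in> V" "w \<in> V" for v w
    using gf that by metis
  have closer_V: "v \<in> V" if "v \<in> closer V E a b" for v a b
    using that by (simp add: closer_def)
  have equidist_V: "v \<in> V" if "v \<in> equidist V E a b" for v a b
    using that by (simp add: equidist_def)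
  have "graph_iso W F W F (f \<circ> \<phi> \<circ> g) (f \<circ> \<phi> \<circ> g)"
    using graph_iso_comp[OF graph_iso_comp[OF graph_iso_sym[OF iso] \<phi>] iso] by (simp add: comp_assoc)
  then have "automorphism W F (f \<circ> \<phi> \<circ> g) \<and> (\<forall>v\<in>W. (f \<circ> \<phi> \<circ> g) ((f \<circ> \<phi> \<circ> g) v) = v)"
    by (simp only: involutive_automorphism_iff_graph_iso)
  then show ?thesis
    using refl x y unfolding reflection_def
    by (simp add: closer_graph_iso[OF iso] equidist_graph_iso[OF iso] graph_iso_edge_iff[OF iso]
        gf f_inj \<phi>_V closer_V equidist_V)
qed

lemma reflection_swaps_closer:
  assumes refl: "reflection V E x y \<phi>" and x: "x \<in> V" and v: "v \<in> closer V E y x"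
  shows "\<phi> v \<in> closer V E x y"
proof -
  have iso: "graph_iso V E V E \<phi> \<phi>"
    using refl by (rule reflection_graph_iso)
  then have y: "y \<in> V" "\<phi> x = y" "\<phi> y = x"
    using refl x unfolding reflection_def graph_iso_def graph_hom_def by auto
  have v_V: "v \<in> V" "\<phi> v \<in> V"
    using v iso unfolding closer_def graph_iso_def graph_hom_def by auto
  have "gdist V E (\<phi> v) x = gdist V E v y"
    using gdist_graph_iso[OF iso v_V(1) y(1)] y by simp
  moreover have "gdist V E (\<phi> v) y = gdist V E v x"
    using gdist_graph_iso[OF iso v_V(1) x] y by simp
  ultimately show ?thesis
    using v v_V unfolding closer_def by auto
qed

lemma simple_graph_edge_vertices: "simple_graph V E \<Longrightarrow> E u v \<Longrightarrow> u \<in> V \<and> v \<in> V"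
  unfolding simple_graph_def by blast

lemma simple_graph_irrefl: "simple_graph V E \<Longrightarrow> \<not> E v v"
  unfolding simple_graph_def by blast

lemma graph_hom_cart_fst: "v \<in> V2 \<Longrightarrow> graph_hom V1 E1 (V1 \<times> V2) (cart_edges E1 E2) (\<lambda>u. (u, v))"
  unfolding graph_hom_def cart_edges_def by simp

lemma graph_hom_cart_snd: "u \<in> V1 \<Longrightarrow> graph_hom V2 E2 (V1 \<times> V2) (cart_edges E1 E2) (\<lambda>v. (u, v))"
  unfolding graph_hom_def cart_edges_def by simp

lemma graph_iso_cart_swap:
  "graph_iso (V1 \<times> V2) (cart_edges E1 E2) (V2 \<times> V1) (cart_edges E2 E1) prod.swap prod.swap"
  unfolding graph_iso_def graph_hom_def cart_edges_def by auto

lemma graph_iso_cart_map_fst: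
  assumes "graph_iso V1 E1 V1 E1 \<psi> \<psi>"
  shows "graph_iso (V1 \<times> V2) (cart_edges E1 E2) (V1 \<times> V2) (cart_edges E1 E2)
    (map_prod \<psi> id) (map_prod \<psi> id)"
proof -
  have "\<psi> u = \<psi> u' \<longleftrightarrow> u = u'" if "u \<in> V1" "u' \<in> V1" for u u'
    using assms that unfolding graph_iso_def by metis
  then show ?thesis
    using assms unfolding graph_iso_def graph_hom_def cart_edges_def by auto
qed

lemma ex_reflection_cart_swap:
  assumes "x \<in> V1 \<times> V2"
  shows "(\<exists>\<Phi>. reflection (V1 \<times> V2) (cart_edges E1 E2) x y \<Phi>) \<longleftrightarrow>
    (\<exists>\<Phi>. reflection (V2 \<times> V1) (cart_edges E2 E1) (prod.swap x) (prod.swap y) \<Phi>)"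
proof
  assume "\<exists>\<Phi>. reflection (V1 \<times> V2) (cart_edges E1 E2) x y \<Phi>"
  then show "\<exists>\<Phi>. reflection (V2 \<times> V1) (cart_edges E2 E1) (prod.swap x) (prod.swap y) \<Phi>"
    using reflection_transfer[OF graph_iso_cart_swap assms] by blast
next
  assume "\<exists>\<Phi>. reflection (V2 \<times> V1) (cart_edges E2 E1) (prod.swap x) (prod.swap y) \<Phi>"
  then obtain \<Phi> where "reflection (V2 \<times> V1) (cart_edges E2 E1) (prod.swap x) (prod.swap y) \<Phi>"
    by blast
  moreover have "prod.swap x \<in> V2 \<times> V1"
    using assms by auto
  ultimately have "reflection (V1 \<times> V2) (cart_edges E1 E2) (prod.swap (prod.swap x))
      (prod.swap (prod.swap y)) (prod.swap \<circ> \<Phi> \<circ> prod.swap)"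
    by (intro reflection_transfer[OF graph_iso_cart_swap])
  then show "\<exists>\<Phi>. reflection (V1 \<times> V2) (cart_edges E1 E2) x y \<Phi>"
    by auto
qed

locale graph_product =
  fixes V1 :: "'a set" and E1 :: "'a \<Rightarrow> 'a \<Rightarrow> bool" and V2 :: "'b set" and E2 :: "'b \<Rightarrow> 'b \<Rightarrow> bool"
  assumes simple1: "simple_graph V1 E1" and connected1: "connected_graph V1 E1"
    and simple2: "simple_graph V2 E2" and connected2: "connected_graph V2 E2"
begin

lemma cart_edges_fst_iff: "cart_edges E1 E2 (u, v) (u', v) \<longleftrightarrow> E1 u u'"
  using simple_graph_irrefl[OF simple2] unfolding cart_edges_def by simp

lemma reach_cart_ge_gdist:
  "reach (V1 \<times> V2) (cart_edges E1 E2) p q n \<Longrightarrow>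
    gdist V1 E1 (fst p) (fst q) + gdist V2 E2 (snd p) (snd q) \<le> n"
proof (induction rule: reach.induct)
  case (reach_refl p)
  then show ?case by (auto simp: gdist_self)
next
  case (reach_step p q n r)
  have "p \<in> V1 \<times> V2" "q \<in> V1 \<times> V2"
    using reach_vertices[OF reach_step.hyps(1)] by auto
  with reach_step.hyps(3) have
    "gdist V1 E1 (fst p) (fst r) \<le> gdist V1 E1 (fst p) (fst q) + gdist V1 E1 (fst q) (fst r)"
    "gdist V2 E2 (snd p) (snd r) \<le> gdist V2 E2 (snd p) (snd q) + gdist V2 E2 (snd q) (snd r)"
    by (auto intro: gdist_triangle connected1 connected2)
  moreover have "gdist V1 E1 (fst q) (fst r) + gdist V2 E2 (snd q) (snd r) \<le> 1"
    using reach_step.hyps(2) \<open>q \<in> V1 \<times> V2\<close> reach_step.hyps(3) gdist_edge[of E1] gdist_edge[of E2]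
    unfolding cart_edges_def by (auto simp: gdist_self)
  ultimately show ?case
    using reach_step.IH by linarith
qed

lemma gdist_cart:
  assumes "u \<in> V1" "u' \<in> V1" "v \<in> V2" "v' \<in> V2"
  shows "gdist (V1 \<times> V2) (cart_edges E1 E2) (u, v) (u', v') = gdist V1 E1 u u' + gdist V2 E2 v v'"
proof -
  have "reach (V1 \<times> V2) (cart_edges E1 E2) (u, v) (u', v) (gdist V1 E1 u u')"
    using reach_graph_hom[OF connected_graph_reach[OF connected1 assms(1,2)]
        graph_hom_cart_fst[OF assms(3)]] by simp
  moreover have "reach (V1 \<times> V2) (cart_edges E1 E2) (u', v) (u', v') (gdist V2 E2 v v')"
    using reach_graph_hom[OF connected_graph_reach[OF connected2 assms(3,4)]
        graph_hom_cart_snd[OF assms(2)]] by simp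
  ultimately have
    "reach (V1 \<times> V2) (cart_edges E1 E2) (u, v) (u', v') (gdist V1 E1 u u' + gdist V2 E2 v v')"
    by (rule reach_trans[rotated])
  then show ?thesis
    using gdist_le_reach reach_cart_ge_gdist[OF reach_gdist] by (metis fst_conv snd_conv le_antisym)
qed

lemma closer_cart_fst:
  "a \<in> V1 \<Longrightarrow> a' \<in> V1 \<Longrightarrow> b \<in> V2 \<Longrightarrow>
    closer (V1 \<times> V2) (cart_edges E1 E2) (a, b) (a', b) = closer V1 E1 a a' \<times> V2"
  unfolding closer_def by (auto simp: gdist_cart)

lemma equidist_cart_fst:
  "a \<in> V1 \<Longrightarrow> a' \<in> V1 \<Longrightarrow> b \<in> V2 \<Longrightarrow>
    equidist (V1 \<times> V2) (cart_edges E1 E2) (a, b) (a', b) = equidist V1 E1 a a' \<times> V2"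
  unfolding equidist_def by (auto simp: gdist_cart)

lemma reflection_cart_fst:
  assumes refl: "reflection V1 E1 a a' \<psi>" and a: "a \<in> V1" and b: "b \<in> V2"
  shows "reflection (V1 \<times> V2) (cart_edges E1 E2) (a, b) (a', b) (map_prod \<psi> id)"
proof -
  have \<psi>: "graph_iso V1 E1 V1 E1 \<psi> \<psi>"
    using refl by (rule reflection_graph_iso)
  have a': "a' \<in> V1"
    using \<psi> a refl unfolding reflection_def graph_iso_def graph_hom_def by auto
  have ce: "\<forall>u\<in>closer V1 E1 a a'. \<forall>w\<in>closer V1 E1 a' a. E1 u w \<longleftrightarrow> w = \<psi> u"
    and cl: "\<forall>u\<in>closer V1 E1 a a'. \<psi> u \<in> closer V1 E1 a' a \<and> E1 u (\<psi> u)"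
    and eq: "\<forall>v\<in>equidist V1 E1 a a'. \<psi> v = v"
    using refl unfolding reflection_def by blast+
  have "cart_edges E1 E2 p q \<longleftrightarrow> q = map_prod \<psi> id p"
    if "p \<in> closer V1 E1 a a' \<times> V2" "q \<in> closer V1 E1 a' a \<times> V2" for p q
    using that ce closer_disjoint unfolding cart_edges_def by (cases p, cases q) fastforce
  moreover have "automorphism (V1 \<times> V2) (cart_edges E1 E2) (map_prod \<psi> id) \<and>
      (\<forall>p\<in>V1 \<times> V2. map_prod \<psi> id (map_prod \<psi> id p) = p)"
    using graph_iso_cart_map_fst[OF \<psi>] by (simp only: involutive_automorphism_iff_graph_iso)
  ultimately show ?thesis
    using refl cl eq a a' b
    by (auto simp: reflection_def closer_cart_fst equidist_cart_fst cart_edges_def)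
qed

lemma reflection_cart_fst_preserves_snd:
  assumes refl: "reflection (V1 \<times> V2) (cart_edges E1 E2) (a, b) (a', b) \<Phi>"
    and a: "a \<in> V1" "a' \<in> V1" and b: "b \<in> V2" and u: "u \<in> V1" and c: "c \<in> V2"
  shows "snd (\<Phi> (u, c)) = c"
proof -
  let ?C = "closer (V1 \<times> V2) (cart_edges E1 E2) (a, b) (a', b)"
  let ?C' = "closer (V1 \<times> V2) (cart_edges E1 E2) (a', b) (a, b)"
  have C: "?C = closer V1 E1 a a' \<times> V2" "?C' = closer V1 E1 a' a \<times> V2"
    using a b by (simp_all add: closer_cart_fst)
  have across: "snd (\<Phi> (w, d)) = d" if "w \<in> closer V1 E1 a a'" "d \<in> V2" for w d
  proof -
    have "\<Phi> (w, d) \<in> ?C'" "cart_edges E1 E2 (w, d) (\<Phi> (w, d))"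
      using refl that C unfolding reflection_def by auto
    moreover from this have "fst (\<Phi> (w, d)) \<noteq> w"
      using that C closer_disjoint by fastforce
    ultimately show ?thesis
      unfolding cart_edges_def by auto
  qed
  consider "u \<in> closer V1 E1 a a'" | "u \<in> closer V1 E1 a' a" | "u \<in> equidist V1 E1 a a'"
    using u unfolding closer_def equidist_def by fastforce
  then show ?thesis
  proof cases
    case 1
    then show ?thesis using across c by blast
  next
    case 2
    then have "\<Phi> (u, c) \<in> ?C"
      using reflection_swaps_closer[OF refl] a b c C by auto
    then obtain w d where w: "\<Phi> (u, c) = (w, d)" "w \<in> closer V1 E1 a a'" "d \<in> V2"
      using C by auto
    then have "\<Phi> (w, d) = (u, c)"
      using refl u c unfolding reflection_def by (metis mem_Times_iff fst_conv snd_conv)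
    then show ?thesis
      using across[OF w(2,3)] w(1) by simp
  next
    case 3
    then show ?thesis
      using refl c a b unfolding reflection_def by (simp add: equidist_cart_fst)
  qed
qed

lemma graph_iso_cart_fibre:
  assumes \<Phi>: "graph_iso (V1 \<times> V2) (cart_edges E1 E2) (V1 \<times> V2) (cart_edges E1 E2) \<Phi> \<Phi>"
    and b: "b \<in> V2" and fibre: "\<And>u. u \<in> V1 \<Longrightarrow> snd (\<Phi> (u, b)) = b"
  shows "graph_iso V1 E1 V1 E1 (\<lambda>u. fst (\<Phi> (u, b))) (\<lambda>u. fst (\<Phi> (u, b)))"
proof -
  define \<psi> where "\<psi> u = fst (\<Phi> (u, b))" for u
  have \<Phi>_b: "\<Phi> (u, b) = (\<psi> u, b)" if "u \<in> V1" for u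
    using fibre[OF that] unfolding \<psi>_def by (metis prod.collapse)
  have \<Phi>_V: "\<Phi> p \<in> V1 \<times> V2" and \<Phi>_inv: "\<Phi> (\<Phi> p) = p" if "p \<in> V1 \<times> V2" for p
    using \<Phi> that unfolding graph_iso_def graph_hom_def by blast+
  have \<psi>_V: "\<psi> u \<in> V1" if "u \<in> V1" for u
    using \<Phi>_V[of "(u, b)"] that b \<Phi>_b[OF that] by simp
  moreover have "\<psi> (\<psi> u) = u" if "u \<in> V1" for u
    using \<Phi>_inv[of "(u, b)"] that b \<Phi>_b[OF that] \<Phi>_b[OF \<psi>_V[OF that]] by simp
  moreover have "E1 (\<psi> u) (\<psi> v) \<longleftrightarrow> E1 u v" if "u \<in> V1" "v \<in> V1" for u v
    using graph_iso_edge_iff[OF \<Phi>, of "(u, b)" "(v, b)"] that b \<Phi>_b by (simp add: cart_edges_fst_iff)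
  ultimately show ?thesis
    unfolding graph_iso_def graph_hom_def \<psi>_def[symmetric] by blast
qed

lemma reflection_cart_fst_restrict:
  assumes refl: "reflection (V1 \<times> V2) (cart_edges E1 E2) (a, b) (a', b) \<Phi>"
    and a: "a \<in> V1" "a' \<in> V1" and b: "b \<in> V2"
  shows "reflection V1 E1 a a' (\<lambda>u. fst (\<Phi> (u, b)))"
proof -
  define \<psi> where "\<psi> u = fst (\<Phi> (u, b))" for u
  have fibre: "\<Phi> (u, b) = (\<psi> u, b)" if "u \<in> V1" for u
    using reflection_cart_fst_preserves_snd[OF refl a b that b] unfolding \<psi>_def by (metis prod.collapse)
  have "graph_iso V1 E1 V1 E1 \<psi> \<psi>"
    using graph_iso_cart_fibre[OF reflection_graph_iso[OF refl] b]
      reflection_cart_fst_preserves_snd[OF refl a b _ b] unfolding \<psi>_def by blast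
  then have "automorphism V1 E1 \<psi> \<and> (\<forall>u\<in>V1. \<psi> (\<psi> u) = u)"
    by (simp only: involutive_automorphism_iff_graph_iso)
  moreover have "u \<in> V1" if "u \<in> closer V1 E1 x y" for u x y
    using that by (simp add: closer_def)
  moreover have "u \<in> V1" if "u \<in> equidist V1 E1 x y" for u x y
    using that by (simp add: equidist_def)
  moreover have
    "\<forall>u\<in>closer V1 E1 a a'. \<forall>w\<in>closer V1 E1 a' a. cart_edges E1 E2 (u, b) (w, b) \<longleftrightarrow> (w, b) = \<Phi> (u, b)"
    "\<forall>u\<in>closer V1 E1 a a'. \<Phi> (u, b) \<in> closer V1 E1 a' a \<times> V2 \<and> cart_edges E1 E2 (u, b) (\<Phi> (u, b))"
    "\<forall>v\<in>equidist V1 E1 a a'. \<Phi> (v, b) = (v, b)"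
    "\<Phi> (a, b) = (a', b)"
    using refl a b unfolding reflection_def by (auto simp: closer_cart_fst equidist_cart_fst)
  ultimately show ?thesis
    unfolding reflection_def \<psi>_def[symmetric] using a
    by (auto simp: fibre cart_edges_fst_iff)
qed

lemma reflective_iff_cart_fst_reflections:
  "reflective V1 E1 \<longleftrightarrow>
    (\<forall>a a' b. E1 a a' \<longrightarrow> b \<in> V2 \<longrightarrow>
      (\<exists>\<Phi>. reflection (V1 \<times> V2) (cart_edges E1 E2) (a, b) (a', b) \<Phi>))"
  (is "_ \<longleftrightarrow> ?fst_reflections")
proof
  assume "reflective V1 E1"
  then show ?fst_reflections
    unfolding reflective_def
    using reflection_cart_fst simple_graph_edge_vertices[OF simple1] by blast
next
  assume ?fst_reflections
  moreover obtain b where "b \<in> V2"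
    using connected2 unfolding connected_graph_def by blast
  ultimately show "reflective V1 E1"
    unfolding reflective_def using reflection_cart_fst_restrict by blast
qed

lemma reflective_cart_iff:
  "reflective (V1 \<times> V2) (cart_edges E1 E2) \<longleftrightarrow>
    (\<forall>a a' b. E1 a a' \<longrightarrow> b \<in> V2 \<longrightarrow> (\<exists>\<Phi>. reflection (V1 \<times> V2) (cart_edges E1 E2) (a, b) (a', b) \<Phi>)) \<and>
    (\<forall>a b b'. E2 b b' \<longrightarrow> a \<in> V1 \<longrightarrow> (\<exists>\<Phi>. reflection (V1 \<times> V2) (cart_edges E1 E2) (a, b) (a, b') \<Phi>))"
  unfolding reflective_def cart_edges_def
  using simple_graph_edge_vertices[OF simple1] simple_graph_edge_vertices[OF simple2] by auto

end

theorem lemma2p8: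
  fixes V1 :: "'a set" and E1 :: "'a \<Rightarrow> 'a \<Rightarrow> bool"
    and V2 :: "'b set" and E2 :: "'b \<Rightarrow> 'b \<Rightarrow> bool"
  assumes "finite V1" "simple_graph V1 E1" "connected_graph V1 E1"
      and "finite V2" "simple_graph V2 E2" "connected_graph V2 E2"
  shows "(reflective V1 E1 \<and> reflective V2 E2) \<longleftrightarrow>
         reflective (V1 \<times> V2) (cart_edges E1 E2)"
proof -
  interpret G12: graph_product V1 E1 V2 E2
    using assms by unfold_locales
  interpret G21: graph_product V2 E2 V1 E1
    using assms by unfold_locales
  have swap: "(\<exists>\<Phi>. reflection (V2 \<times> V1) (cart_edges E2 E1) (b, a) (b', a) \<Phi>) \<longleftrightarrow>
      (\<exists>\<Phi>. reflection (V1 \<times> V2) (cart_edges E1 E2) (a, b) (a, b') \<Phi>)"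
    if "E2 b b'" "a \<in> V1" for a b b'
    using ex_reflection_cart_swap[of "(a, b)" V1 V2 E1 E2 "(a, b')"] that
      simple_graph_edge_vertices[OF assms(5)] by auto
  have "reflective V2 E2 \<longleftrightarrow>
      (\<forall>a b b'. E2 b b' \<longrightarrow> a \<in> V1 \<longrightarrow> (\<exists>\<Phi>. reflection (V1 \<times> V2) (cart_edges E1 E2) (a, b) (a, b') \<Phi>))"
    unfolding G21.reflective_iff_cart_fst_reflections using swap by blast
  then show ?thesis
    using G12.reflective_iff_cart_fst_reflections G12.reflective_cart_iff by blast
qed

end
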